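(* Let $N\equiv 3\pmod 4$ be a prime and let $h_1,h_2,c_1,c_2,c_4\in\mathbb Z$ with $4c_1c_4-c_2^2\not\equiv 0\pmod N$. Let $a,b$ be arbitrary integers coprime to $N$, and let $L(c_1,c_2,c_4,h_1,h_2)$ denote the number of triples $d_1,d_2,d_4\pmod N$ satisfying \[ h_1\equiv a(d_1+d_4),\qquad (d_1d_4-d_2^2)h_2\equiv b(d_4c_1-d_2c_2+d_1c_4),\qquad d_1d_4-d_2^2\not\equiv 0\pmod N. \] Then \[ L(c_1,c_2,c_4,h_1,h_2)=\delta_{h_1\equiv h_2\equiv 0\ (\mathrm{mod}\ N)}\,\delta_{c_1\equiv c_4,\ c_2\equiv 0\ (\mathrm{mod}\ N)}\,N^2+\mathcal O(N), \] where $\delta_{\cdot}$ is $1$ if the indicated condition holds and $0$ otherwise, and the implied constant is absolute. *)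

theory Defs
  imports "HOL-Number_Theory.Number_Theory"
begin

definition L_count :: "int \<Rightarrow> int \<Rightarrow> int \<Rightarrow> int \<Rightarrow> int \<Rightarrow> int \<Rightarrow> int \<Rightarrow> int \<Rightarrow> nat" where
  "L_count N a b c1 c2 c4 h1 h2 =
     card {(d1::int, d2::int, d4::int).
             d1 \<in> {0..<N} \<and> d2 \<in> {0..<N} \<and> d4 \<in> {0..<N} \<and>
             [h1 = a * (d1 + d4)] (mod N) \<and>
             [(d1 * d4 - d2^2) * h2 = b * (d4 * c1 - d2 * c2 + d1 * c4)] (mod N) \<and>
             \<not> [d1 * d4 - d2^2 = 0] (mod N)}"

end

theory Submission
  imports Defs
begin

text \<open>
  Since \<open>a\<close> is a unit mod \<open>N\<close>, the first congruence determines \<open>d4\<close> from \<open>d1\<close>, so \<open>L\<close> counts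
  pairs \<open>(d1, d2)\<close>. Adding \<open>a\<close> times the second congruence to \<open>h2 d1 - b c1\<close> times the first
  eliminates \<open>d4\<close>: every counted pair is a zero mod \<open>N\<close> of
  \<open>Q = -a h2 d1\<^sup>2 + (h1 h2 + a b (c1 - c4)) d1 - a h2 d2\<^sup>2 + a b c2 d2 - b c1 h1\<close>.
  For fixed \<open>d2\<close> (or fixed \<open>d1\<close>) this is a polynomial of degree at most 2 in the other variable,
  so \<open>Q\<close> has at most \<open>2N\<close> zeros unless all its coefficients vanish mod \<open>N\<close>; because
  \<open>4 c1 c4 - c2\<^sup>2\<close> is a unit, that happens only when \<open>h1 \<equiv> h2 \<equiv> 0\<close>, \<open>c1 \<equiv> c4\<close>, \<open>c2 \<equiv> 0\<close>.
  In this degenerate case the conditions reduce to \<open>d4 \<equiv> -d1\<close> and \<open>d1\<^sup>2 + d2\<^sup>2 \<not>\<equiv> 0\<close>, and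
  the zeros of \<open>d1\<^sup>2 + d2\<^sup>2\<close> are again at most \<open>2N\<close> in number.
\<close>

lemma card_le_mult_card_if_fibres_le:
  assumes "finite B" "f ` X \<subseteq> B" "\<And>y. y \<in> B \<Longrightarrow> card {x \<in> X. f x = y} \<le> k"
  shows "card X \<le> k * card B"
proof -
  have "X = (\<Union>y\<in>B. {x \<in> X. f x = y})" using assms(2) by auto
  then have "card X \<le> (\<Sum>y\<in>B. card {x \<in> X. f x = y})"
    using card_UN_le[OF assms(1)] by metis
  also have "\<dots> \<le> (\<Sum>y\<in>B. k)" by (rule sum_mono) (rule assms(3))
  finally show ?thesis by (simp add: mult.commute)
qed

lemma card_quadratic_roots_mod_prime:
  fixes p A B C :: int
  assumes p: "prime p" and nonzero: "\<not> (p dvd A \<and> p dvd B)"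
  shows "card {x \<in> {0..<p}. p dvd A*x^2 + B*x + C} \<le> 2"
proof -
  define R where "R = {x \<in> {0..<p}. p dvd A*x^2 + B*x + C}"
  have fin: "finite R" unfolding R_def by (rule finite_subset[of _ "{0..<p}"]) auto
  have eq_if_dvd: "x = y" if "x \<in> R" "y \<in> R" "p dvd x - y" for x y
    using that cong_less_imp_eq_int[of x p y] by (simp add: R_def cong_iff_dvd_diff)
  have "card R \<le> 2"
  proof (cases "R = {}")
    case False
    then obtain x where x: "x \<in> R" by blast
    have secant: "p dvd A*(x+y) + B" if y: "y \<in> R - {x}" for y
    proof -
      have "p dvd (A*x^2 + B*x + C) - (A*y^2 + B*y + C)"
        using x y by (intro dvd_diff) (auto simp: R_def)
      also have "(A*x^2 + B*x + C) - (A*y^2 + B*y + C) = (x - y) * (A*(x+y) + B)"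
        by (simp add: algebra_simps power2_eq_square)
      finally show ?thesis using p eq_if_dvd x y by (auto simp: prime_dvd_mult_iff)
    qed
    have "y = z" if y: "y \<in> R - {x}" and z: "z \<in> R - {x}" for y z
    proof -
      have "p dvd (A*(x+y) + B) - (A*(x+z) + B)" using secant y z by (intro dvd_diff)
      then have "p dvd A * (y - z)" by (simp add: algebra_simps)
      moreover have "\<not> p dvd A" using nonzero secant[OF y] by (metis dvd_add_right_iff dvd_mult2)
      ultimately show ?thesis using p y z eq_if_dvd by (auto simp: prime_dvd_mult_iff)
    qed
    then have "card (R - {x}) \<le> 1" by (simp add: card_le_Suc0_iff_eq fin)
    with x fin show ?thesis by (simp add: card_Diff_singleton)
  qed simp
  then show ?thesis by (simp add: R_def)
qed

lemma card_zeros_quadratic_in_first_mod_prime: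
  fixes p A B :: int and g :: "int \<Rightarrow> int"
  assumes "prime p" and "\<not> (p dvd A \<and> p dvd B)"
  shows "card {(x, y) \<in> {0..<p} \<times> {0..<p}. p dvd A*x^2 + B*x + g y} \<le> 2 * nat p"
    (is "card ?Z \<le> _")
proof -
  have "card ?Z \<le> 2 * card {0..<p}"
  proof (rule card_le_mult_card_if_fibres_le[where f = snd])
    show "snd ` ?Z \<subseteq> {0..<p}" by auto
  next
    fix y
    let ?R = "{x \<in> {0..<p}. p dvd A*x^2 + B*x + g y}"
    have "finite ?R" by (rule finite_subset[of _ "{0..<p}"]) auto
    moreover have "{z \<in> ?Z. snd z = y} \<subseteq> (\<lambda>x. (x, y)) ` ?R" by auto
    ultimately have "card {z \<in> ?Z. snd z = y} \<le> card ((\<lambda>x. (x, y)) ` ?R)"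
      by (intro card_mono finite_imageI)
    also have "\<dots> = card ?R" by (simp add: card_image inj_on_def)
    also have "\<dots> \<le> 2" by (rule card_quadratic_roots_mod_prime[OF assms])
    finally show "card {z \<in> ?Z. snd z = y} \<le> 2" .
  qed simp
  then show ?thesis by simp
qed

lemma card_zeros_two_variable_quadratic_mod_prime:
  fixes p A B C D E :: int
  assumes p: "prime p" and nonzero: "\<not> (p dvd A \<and> p dvd B \<and> p dvd C \<and> p dvd D \<and> p dvd E)"
  shows "card {(x, y) \<in> {0..<p} \<times> {0..<p}. p dvd A*x^2 + B*x + C*y^2 + D*y + E} \<le> 2 * nat p"
    (is "card ?Z \<le> _")
proof -
  consider "\<not> (p dvd A \<and> p dvd B)" | "\<not> (p dvd C \<and> p dvd D)"
    | "p dvd A" "p dvd B" "p dvd C" "p dvd D" by blast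
  then show ?thesis
  proof cases
    case 1
    have "?Z = {(x, y) \<in> {0..<p} \<times> {0..<p}. p dvd A*x^2 + B*x + (C*y^2 + D*y + E)}"
      by (simp add: add.assoc)
    with card_zeros_quadratic_in_first_mod_prime[OF p 1] show ?thesis by simp
  next
    case 2
    have "?Z = prod.swap ` {(y, x) \<in> {0..<p} \<times> {0..<p}. p dvd C*y^2 + D*y + (A*x^2 + B*x + E)}"
      by (auto simp: image_iff add.commute add.left_commute)
    with card_zeros_quadratic_in_first_mod_prime[OF p 2] show ?thesis by (simp add: card_image)
  next
    case 3
    have "?Z = {}"
    proof (intro equals0I)
      fix z assume "z \<in> ?Z"
      then obtain x y where "p dvd A*x^2 + B*x + C*y^2 + D*y + E" by auto
      moreover have "p dvd A*x^2 + B*x + C*y^2 + D*y" using 3 by simp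
      ultimately have "p dvd E" by (metis dvd_add_right_iff)
      with 3 nonzero show False by blast
    qed
    then show ?thesis by (metis card.empty zero_le)
  qed
qed

definition L_triples :: "int \<Rightarrow> int \<Rightarrow> int \<Rightarrow> int \<Rightarrow> int \<Rightarrow> int \<Rightarrow> int \<Rightarrow> int \<Rightarrow> (int \<times> int \<times> int) set"
  where "L_triples N a b c1 c2 c4 h1 h2 =
     {(d1, d2, d4).
        d1 \<in> {0..<N} \<and> d2 \<in> {0..<N} \<and> d4 \<in> {0..<N} \<and>
        [h1 = a * (d1 + d4)] (mod N) \<and>
        [(d1 * d4 - d2^2) * h2 = b * (d4 * c1 - d2 * c2 + d1 * c4)] (mod N) \<and>
        \<not> [d1 * d4 - d2^2 = 0] (mod N)}"

lemma L_count_eq_card_L_triples: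
  "L_count N a b c1 c2 c4 h1 h2 = card (L_triples N a b c1 c2 c4 h1 h2)"
  by (simp add: L_count_def L_triples_def)

lemma finite_L_triples: "finite (L_triples N a b c1 c2 c4 h1 h2)"
  by (rule finite_subset[of _ "{0..<N} \<times> {0..<N} \<times> {0..<N}"]) (auto simp: L_triples_def)

lemma L_count_le_card_zeros:
  fixes N a b c1 c2 c4 h1 h2 :: int
  assumes a: "coprime a N"
  shows "L_count N a b c1 c2 c4 h1 h2 \<le> card {(d1, d2) \<in> {0..<N} \<times> {0..<N}.
    N dvd (-(a*h2))*d1^2 + (h1*h2 + a*b*(c1 - c4))*d1 + (-(a*h2))*d2^2 + (a*b*c2)*d2 + (-(b*c1*h1))}"
    (is "_ \<le> card ?Z")
proof -
  let ?S = "L_triples N a b c1 c2 c4 h1 h2"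
  have "card ?S \<le> card ?Z"
  proof (rule card_inj_on_le[where f = "\<lambda>(d1, d2, d4). (d1, d2)"])
    have unique_d4: "d4 = e4" if "(d1, d2, d4) \<in> ?S" "(d1, d2, e4) \<in> ?S" for d1 d2 d4 e4
    proof -
      from that have "[a * (d1 + d4) = a * (d1 + e4)] (mod N)"
        and range: "d4 \<in> {0..<N}" "e4 \<in> {0..<N}"
        by (auto simp: L_triples_def intro: cong_sym cong_trans)
      then have "[d4 = e4] (mod N)" using a by (simp add: cong_mult_lcancel cong_add_lcancel)
      with range show ?thesis by (auto intro: cong_less_imp_eq_int)
    qed
    show "inj_on (\<lambda>(d1, d2, d4). (d1, d2)) ?S"
      by (rule inj_onI) (use unique_d4 in fastforce)
  next
    have "(d1, d2) \<in> ?Z" if "(d1, d2, d4) \<in> ?S" for d1 d2 d4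
    proof -
      from that have range: "d1 \<in> {0..<N}" "d2 \<in> {0..<N}"
        and "N dvd h1 - a * (d1 + d4)"
        and "N dvd (d1 * d4 - d2^2) * h2 - b * (d4 * c1 - d2 * c2 + d1 * c4)"
        by (auto simp: L_triples_def cong_iff_dvd_diff)
      then have "N dvd a * ((d1 * d4 - d2^2) * h2 - b * (d4 * c1 - d2 * c2 + d1 * c4))
                 + (h2 * d1 - b * c1) * (h1 - a * (d1 + d4))"
        by (intro dvd_add dvd_mult)
      also have "a * ((d1 * d4 - d2^2) * h2 - b * (d4 * c1 - d2 * c2 + d1 * c4))
                 + (h2 * d1 - b * c1) * (h1 - a * (d1 + d4))
        = (-(a*h2))*d1^2 + (h1*h2 + a*b*(c1 - c4))*d1 + (-(a*h2))*d2^2 + (a*b*c2)*d2 + (-(b*c1*h1))"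
        by (simp add: algebra_simps power2_eq_square)
      finally show ?thesis using range by simp
    qed
    then show "(\<lambda>(d1, d2, d4). (d1, d2)) ` ?S \<subseteq> ?Z" by fast
  next
    show "finite ?Z" by (rule finite_subset[of _ "{0..<N} \<times> {0..<N}"]) auto
  qed
  then show ?thesis by (simp add: L_count_eq_card_L_triples)
qed

lemma L_count_le_square:
  fixes N a b c1 c2 c4 h1 h2 :: int
  assumes "coprime a N"
  shows "L_count N a b c1 c2 c4 h1 h2 \<le> nat N * nat N"
proof -
  have "card {(d1, d2) \<in> {0..<N} \<times> {0..<N}. P d1 d2} \<le> card ({0..<N} \<times> {0..<N})"
    for P :: "int \<Rightarrow> int \<Rightarrow> bool"
    by (rule card_mono) auto
  from order_trans[OF L_count_le_card_zeros[OF assms] this] show ?thesis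
    by (simp add: card_cartesian_product)
qed

lemma L_count_le_if_nondegenerate:
  fixes N a b c1 c2 c4 h1 h2 :: int
  assumes p: "prime N" and disc: "\<not> [4 * c1 * c4 - c2^2 = 0] (mod N)"
    and a: "coprime a N" and b: "coprime b N"
    and nondeg: "\<not> ([h1 = 0] (mod N) \<and> [h2 = 0] (mod N) \<and> [c1 = c4] (mod N) \<and> [c2 = 0] (mod N))"
  shows "L_count N a b c1 c2 c4 h1 h2 \<le> 2 * nat N"
proof -
  have ab: "coprime (a * b) N" using a b by simp
  have "\<not> (N dvd -(a*h2) \<and> N dvd h1*h2 + a*b*(c1 - c4) \<and> N dvd -(a*h2) \<and> N dvd a*b*c2
          \<and> N dvd -(b*c1*h1))"
  proof
    assume coeffs: "N dvd -(a*h2) \<and> N dvd h1*h2 + a*b*(c1 - c4) \<and> N dvd -(a*h2) \<and> N dvd a*b*c2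
          \<and> N dvd -(b*c1*h1)"
    then have h2: "N dvd h2" using a by (simp add: coprime_commute coprime_dvd_mult_right_iff)
    then have c14: "N dvd c1 - c4" using coeffs ab
      by (simp add: coprime_commute coprime_dvd_mult_right_iff dvd_add_right_iff)
    have c2: "N dvd c2" using coeffs ab by (simp add: coprime_commute coprime_dvd_mult_right_iff)
    have "\<not> N dvd c1"
    proof
      assume "N dvd c1"
      with c14 have "N dvd c4" by (metis dvd_diff_right_iff)
      with c2 have "N dvd 4 * c1 * c4 - c2^2" by (simp add: power2_eq_square)
      with disc show False by (simp add: cong_0_iff)
    qed
    moreover have "N dvd c1 * h1" using coeffs b
      by (simp add: coprime_commute coprime_dvd_mult_right_iff mult.assoc)
    ultimately have "N dvd h1" using p by (simp add: prime_dvd_mult_iff)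
    with h2 c14 c2 nondeg show False by (simp add: cong_0_iff cong_iff_dvd_diff)
  qed
  with L_count_le_card_zeros[OF a] card_zeros_two_variable_quadratic_mod_prime[OF p]
  show ?thesis by (meson order_trans)
qed

lemma L_count_lower_bound_if_degenerate:
  fixes N a b c1 c2 c4 h1 h2 :: int
  assumes p: "prime N"
    and deg: "[h1 = 0] (mod N)" "[h2 = 0] (mod N)" "[c1 = c4] (mod N)" "[c2 = 0] (mod N)"
  shows "nat N * nat N \<le> L_count N a b c1 c2 c4 h1 h2 + 2 * nat N"
proof -
  let ?box = "{0..<N} \<times> {0..<N}"
  let ?S = "L_triples N a b c1 c2 c4 h1 h2"
  define Z where "Z = {(d1, d2) \<in> ?box. N dvd d1^2 + d2^2}"
  define lift where "lift = (\<lambda>(d1, d2 :: int). (d1, d2, (- d1) mod N))"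
  have N: "N > 1" using p prime_gt_1_int by blast
  have "card Z \<le> 2 * nat N"
    using card_zeros_two_variable_quadratic_mod_prime[OF p, of 1 0 1 0 0] N by (simp add: Z_def)
  have "lift z \<in> ?S" if "z \<in> ?box - Z" for z
  proof -
    obtain d1 d2 where z: "z = (d1, d2)" by (cases z)
    with that have range: "d1 \<in> {0..<N}" "d2 \<in> {0..<N}" and not_Z: "\<not> N dvd d1^2 + d2^2"
      by (auto simp: Z_def)
    define d4 where "d4 = (- d1) mod N"
    have trace: "N dvd d1 + d4" unfolding d4_def dvd_eq_mod_eq_0 by (simp add: mod_add_right_eq)
    have "[h1 = a * (d1 + d4)] (mod N)"
      using deg(1) trace by (simp add: cong_0_iff cong_iff_dvd_diff)
    moreover have "N dvd (d1 * d4 - d2^2) * h2 - b * (c1 * (d1 + d4) - c2 * d2 - d1 * (c1 - c4))"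
      using deg trace by (simp add: cong_0_iff cong_iff_dvd_diff)
    then have "[(d1 * d4 - d2^2) * h2 = b * (d4 * c1 - d2 * c2 + d1 * c4)] (mod N)"
      by (simp add: cong_iff_dvd_diff algebra_simps)
    moreover have "\<not> [d1 * d4 - d2^2 = 0] (mod N)"
    proof
      assume "[d1 * d4 - d2^2 = 0] (mod N)"
      with trace have "N dvd d1 * (d1 + d4) - (d1 * d4 - d2^2)" by (simp add: cong_0_iff)
      also have "d1 * (d1 + d4) - (d1 * d4 - d2^2) = d1^2 + d2^2"
        by (simp add: algebra_simps power2_eq_square)
      finally show False using not_Z by simp
    qed
    moreover have "d4 \<in> {0..<N}" using N by (simp add: d4_def)
    ultimately show ?thesis using range by (simp add: z lift_def d4_def L_triples_def)
  qed
  then have "lift ` (?box - Z) \<subseteq> ?S" by (rule image_subsetI)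
  moreover have "inj_on lift (?box - Z)" by (auto simp: lift_def inj_on_def)
  ultimately have "card (?box - Z) \<le> L_count N a b c1 c2 c4 h1 h2"
    unfolding L_count_eq_card_L_triples by (intro card_inj_on_le finite_L_triples)
  moreover have "Z \<subseteq> ?box" by (auto simp: Z_def)
  then have "card (?box - Z) = nat N * nat N - card Z"
    by (simp add: card_Diff_subset[OF finite_subset] card_cartesian_product)
  ultimately show ?thesis using \<open>card Z \<le> 2 * nat N\<close> by linarith
qed

theorem lemma8:
  "\<exists>C::real. \<forall>(N::int) (a::int) (b::int) (c1::int) (c2::int) (c4::int) (h1::int) (h2::int).
     prime N \<longrightarrow> [N = 3] (mod 4) \<longrightarrow>
     \<not> [4 * c1 * c4 - c2^2 = 0] (mod N) \<longrightarrow>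
     coprime a N \<longrightarrow> coprime b N \<longrightarrow>
     \<bar>real (L_count N a b c1 c2 c4 h1 h2)
        - (if [h1 = 0] (mod N) \<and> [h2 = 0] (mod N) \<and> [c1 = c4] (mod N) \<and> [c2 = 0] (mod N)
           then real_of_int N ^ 2 else 0)\<bar> \<le> C * real_of_int N"
proof (rule exI[of _ 2], intro allI impI)
  fix N a b c1 c2 c4 h1 h2 :: int
  assume p: "prime N" and "[N = 3] (mod 4)" and disc: "\<not> [4 * c1 * c4 - c2^2 = 0] (mod N)"
    and a: "coprime a N" and b: "coprime b N"
  have N: "real (nat N) = real_of_int N" using prime_gt_0_int[OF p] by simp
  let ?L = "real (L_count N a b c1 c2 c4 h1 h2)"
  show "\<bar>?L - (if [h1 = 0] (mod N) \<and> [h2 = 0] (mod N) \<and> [c1 = c4] (mod N) \<and> [c2 = 0] (mod N)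
           then real_of_int N ^ 2 else 0)\<bar> \<le> 2 * real_of_int N"
  proof (cases "[h1 = 0] (mod N) \<and> [h2 = 0] (mod N) \<and> [c1 = c4] (mod N) \<and> [c2 = 0] (mod N)")
    case True
    then have "real (nat N * nat N) \<le> ?L + real (2 * nat N)" and "?L \<le> real (nat N * nat N)"
      using L_count_lower_bound_if_degenerate[OF p] L_count_le_square[OF a]
      by (simp_all only: of_nat_add [symmetric] of_nat_le_iff)
    with True N show ?thesis by (simp add: power2_eq_square)
  next
    case False
    with L_count_le_if_nondegenerate[OF p disc a b False] N show ?thesis
      unfolding if_not_P[OF False] by simp
  qed
qed

end
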